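(* A pro-$p$ group $G$ is Frattini-resistant if and only if for all finitely generated subgroups $H$ and $K$ of $G$, $\Phi(H)\le\Phi(K)$ implies $H\le K$.
   Context: $p$ is a prime; subgroups are closed; $\Phi(H)$ is the Frattini subgroup. A triple $(G,K,H)$ of pro-$p$ groups with $H\le K\le G$ is hierarchical if $x\in G$, $x^p\in H$ imply $x\in K$. $G$ is Frattini-resistant if $(G,H,\Phi(H))$ is hierarchical for every finitely generated subgroup $H$ of $G$. *)

theory Defs
  imports "HOL-Algebra.Coset" "HOL-Algebra.Generated_Groups"
          "HOL-Analysis.Abstract_Topology_2" "HOL-Analysis.Product_Topology"
          "HOL-Analysis.T1_Spaces" "HOL-Computational_Algebra.Primes"
begin

definition topgroup :: "('a, 'b) monoid_scheme \<Rightarrow> 'a topology \<Rightarrow> bool" where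
  "topgroup G T \<longleftrightarrow> group G \<and> topspace T = carrier G \<and>
     continuous_map (prod_topology T T) T (\<lambda>(x, y). x \<otimes>\<^bsub>G\<^esub> y) \<and>
     continuous_map T T (\<lambda>x. inv\<^bsub>G\<^esub> x)"

text \<open>A pro-p group: a compact, Hausdorff, totally disconnected topological group
  (i.e. a profinite group) in which every open normal subgroup has p-power index.\<close>
definition pro_p_group :: "nat \<Rightarrow> ('a, 'b) monoid_scheme \<Rightarrow> 'a topology \<Rightarrow> bool" where
  "pro_p_group p G T \<longleftrightarrow> prime p \<and> topgroup G T \<and> compact_space T \<and> Hausdorff_space T \<and>
     (\<forall>x \<in> topspace T. connected_component_of_set T x = {x}) \<and>
     (\<forall>N. N \<lhd> G \<and> openin T N \<longrightarrow> (\<exists>k::nat. card (rcosets\<^bsub>G\<^esub> N) = p ^ k))"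

definition closed_subgroup :: "('a, 'b) monoid_scheme \<Rightarrow> 'a topology \<Rightarrow> 'a set \<Rightarrow> bool" where
  "closed_subgroup G T H \<longleftrightarrow> subgroup H G \<and> closedin T H"

definition fg_subgroup :: "('a, 'b) monoid_scheme \<Rightarrow> 'a topology \<Rightarrow> 'a set \<Rightarrow> bool" where
  "fg_subgroup G T H \<longleftrightarrow> closed_subgroup G T H \<and>
     (\<exists>S. finite S \<and> S \<subseteq> H \<and> T closure_of (generate G S) = H)"

definition maximal_open_subgroup ::
  "('a, 'b) monoid_scheme \<Rightarrow> 'a topology \<Rightarrow> 'a set \<Rightarrow> 'a set \<Rightarrow> bool" where
  "maximal_open_subgroup G T H M \<longleftrightarrow>
     subgroup M G \<and> M \<subset> H \<and> openin (subtopology T H) M \<and>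
     (\<forall>L. subgroup L G \<and> M \<subseteq> L \<and> L \<subset> H \<and> openin (subtopology T H) L \<longrightarrow> L = M)"

text \<open>Frattini subgroup: intersection of all maximal open subgroups of H
  (equal to H if there are none).\<close>
definition frattini :: "('a, 'b) monoid_scheme \<Rightarrow> 'a topology \<Rightarrow> 'a set \<Rightarrow> 'a set" where
  "frattini G T H = H \<inter> \<Inter> {M. maximal_open_subgroup G T H M}"

definition hierarchical :: "nat \<Rightarrow> ('a, 'b) monoid_scheme \<Rightarrow> 'a set \<Rightarrow> 'a set \<Rightarrow> bool" where
  "hierarchical p G K H \<longleftrightarrow> (\<forall>x \<in> carrier G. x [^]\<^bsub>G\<^esub> p \<in> H \<longrightarrow> x \<in> K)"

definition frattini_resistant :: "nat \<Rightarrow> ('a, 'b) monoid_scheme \<Rightarrow> 'a topology \<Rightarrow> bool" where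
  "frattini_resistant p G T \<longleftrightarrow>
     (\<forall>H. fg_subgroup G T H \<longrightarrow> hierarchical p G H (frattini G T H))"

end

theory Submission
  imports Defs "HOL-Algebra.Group_Action" "HOL-Algebra.Zassenhaus" "HOL-Algebra.Multiplicative_Group"
    "HOL-Algebra.Left_Coset" "HOL-Analysis.Abstract_Topological_Spaces"
begin

(*
  If G is Frattini-resistant and Phi(H) <= Phi(K), then every h in H has h^p in Phi(H) <= Phi(K),
  hence h in K. That h^p lies in every maximal open subgroup M of H is where pro-p-ness enters:
  for an open normal subgroup N of G with H Int N <= M, the image of M is a maximal subgroup of
  the image of H in the finite p-group G/N, hence normal of index p.

  Conversely, let x^p lie in Phi(H), and put C = closure <x> and D = C Int Phi(H). As x^p lies in
  the closed subgroup D, the cosets D x^i with i < p cover C. So D is open in C, and a subgroup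
  strictly between D and C would contain some x^i with 0 < i < p, hence x. Thus D = C or D is a
  maximal open subgroup of C; either way Phi(C) <= D <= Phi(H), and the hypothesis applied to the
  finitely generated subgroups C and H gives x in C <= H.
*)

lemma (in group) inv_m_cancel_left: "x \<in> carrier G \<Longrightarrow> y \<in> carrier G \<Longrightarrow> inv x \<otimes> (x \<otimes> y) = y"
  by (simp add: m_assoc[symmetric])

lemma (in group) m_inv_cancel_left: "x \<in> carrier G \<Longrightarrow> y \<in> carrier G \<Longrightarrow> x \<otimes> (inv x \<otimes> y) = y"
  by (simp add: m_assoc[symmetric])

lemmas (in group) group_normalize = m_assoc inv_mult_group inv_m_cancel_left m_inv_cancel_left

lemma (in group) subgroup_nat_pow_closed: "subgroup H G \<Longrightarrow> h \<in> H \<Longrightarrow> h [^] (n :: nat) \<in> H"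
  using subgroup_int_pow_closed[of H h "int n"] by (simp add: int_pow_int)

lemma (in group) coprime_int_pows_in_subgroup:
  fixes m n :: int
  assumes H: "subgroup H G" and x: "x \<in> carrier G"
    and m: "x [^] m \<in> H" and n: "x [^] n \<in> H" and "coprime m n"
  shows "x \<in> H"
proof -
  obtain u v where "u * m + v * n = 1"
    using bezout_int[of m n] \<open>coprime m n\<close> by (auto simp: coprime_iff_gcd_eq_1)
  then have "x = (x [^] m) [^] u \<otimes> (x [^] n) [^] v"
    using x by (simp add: int_pow_pow int_pow_mult[symmetric] mult.commute)
  also have "\<dots> \<in> H"
    using H m n by (simp add: subgroup.m_closed subgroup_int_pow_closed)
  finally show ?thesis .
qed

lemma (in group) subgroup_subset_if_pow_cosets_cover:
  fixes p :: nat
  assumes p: "prime p" and D: "subgroup D G" and L: "subgroup L G" "D \<subseteq> L"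
    and x: "x \<in> carrier G" "x \<notin> L" "x [^] p \<in> D"
    and cover: "L \<subseteq> (\<Union>i < p. D #> x [^] i)"
  shows "L \<subseteq> D"
proof
  fix l assume "l \<in> L"
  then obtain i d where i: "i < p" and d: "d \<in> D" "l = d \<otimes> x [^] i"
    using cover unfolding r_coset_def by blast
  have "inv d \<otimes> l \<in> L"
    using subgroup.m_closed[OF L(1) subgroup.m_inv_closed[OF L(1)] \<open>l \<in> L\<close>] d(1) L(2) by blast
  then have "x [^] i \<in> L"
    using d x(1) subgroup.mem_carrier[OF D] by (simp add: inv_m_cancel_left)
  have "i = 0"
  proof (rule ccontr)
    assume "i \<noteq> 0"
    then have "coprime (int i) (int p)"
      using prime_imp_coprime[OF p, of i] nat_dvd_not_less[of i p] i by (simp add: coprime_commute)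
    moreover have "x [^] int i \<in> L" "x [^] int p \<in> L"
      using \<open>x [^] i \<in> L\<close> x(3) L(2) by (auto simp: int_pow_int)
    ultimately have "x \<in> L"
      using coprime_int_pows_in_subgroup[OF L(1) x(1)] by blast
    then show False
      using x(2) by blast
  qed
  then show "l \<in> D"
    using d subgroup.mem_carrier[OF D] by simp
qed

lemma (in group) r_coset_eq_iff:
  assumes H: "subgroup H G" and a: "a \<in> carrier G" and b: "b \<in> carrier G"
  shows "H #> a = H #> b \<longleftrightarrow> a \<otimes> inv b \<in> H"
proof
  assume "H #> a = H #> b"
  then have "a \<in> H #> b"
    using rcos_self[OF a H] by simp
  then show "a \<otimes> inv b \<in> H"
    using subgroup.rcos_module_imp[OF H is_group b] by blast
next
  assume "a \<otimes> inv b \<in> H"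
  then have "a \<in> H #> b"
    using subgroup.rcos_module_rev[OF H is_group b a] by blast
  then show "H #> a = H #> b"
    using repr_independence[OF _ b H] by simp
qed

lemma (in group) r_coset_eq_preimage:
  assumes "subgroup H G" "g \<in> carrier G"
  shows "H #> g = {x \<in> carrier G. x \<otimes> inv g \<in> H}"
proof
  show "H #> g \<subseteq> {x \<in> carrier G. x \<otimes> inv g \<in> H}"
    using assms by (auto simp: r_coset_def group_normalize subgroup.mem_carrier)
  show "{x \<in> carrier G. x \<otimes> inv g \<in> H} \<subseteq> H #> g"
  proof
    fix x assume x: "x \<in> {x \<in> carrier G. x \<otimes> inv g \<in> H}"
    then have "x = (x \<otimes> inv g) \<otimes> g"
      using assms(2) by (simp add: m_assoc)
    then show "x \<in> H #> g"
      using x unfolding r_coset_def by blast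
  qed
qed

lemma (in group) l_coset_eq_preimage:
  assumes "subgroup H G" "g \<in> carrier G"
  shows "g <# H = {x \<in> carrier G. inv g \<otimes> x \<in> H}"
proof
  show "g <# H \<subseteq> {x \<in> carrier G. inv g \<otimes> x \<in> H}"
    using assms by (auto simp: l_coset_def group_normalize subgroup.mem_carrier)
  show "{x \<in> carrier G. inv g \<otimes> x \<in> H} \<subseteq> g <# H"
  proof
    fix x assume x: "x \<in> {x \<in> carrier G. inv g \<otimes> x \<in> H}"
    then have "x = g \<otimes> (inv g \<otimes> x)"
      using assms(2) by (simp add: group_normalize)
    then show "x \<in> g <# H"
      using x unfolding l_coset_def by blast
  qed
qed

lemma (in group) conjugate_eq_image:
  "x \<in> carrier G \<Longrightarrow> x <# B #> inv x = (\<lambda>b. x \<otimes> b \<otimes> inv x) ` B"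
  unfolding l_coset_def r_coset_def by blast

lemma (in group_hom) subgroup_vimage:
  assumes L: "subgroup L H"
  shows "subgroup {x \<in> carrier G. h x \<in> L} G"
proof (rule G.subgroupI)
  show "{x \<in> carrier G. h x \<in> L} \<noteq> {}"
    using subgroup.one_closed[OF L] by force
  show "inv x \<in> {x \<in> carrier G. h x \<in> L}" if "x \<in> {x \<in> carrier G. h x \<in> L}" for x
    using that subgroup.m_inv_closed[OF L] by simp
  show "x \<otimes> y \<in> {x \<in> carrier G. h x \<in> L}"
    if "x \<in> {x \<in> carrier G. h x \<in> L}" "y \<in> {x \<in> carrier G. h x \<in> L}" for x y
    using that subgroup.m_closed[OF L] by simp
qed blast

lemma (in normal) mem_of_r_coset_eq:
  assumes K: "subgroup K G" "subgroup M G" "M \<subseteq> K" "K \<inter> H \<subseteq> M"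
    and x: "x \<in> K" and m: "m \<in> M" and eq: "H #> x = H #> m"
  shows "x \<in> M"
proof -
  have xc: "x \<in> carrier G" and mc: "m \<in> carrier G"
    using subgroup.mem_carrier[OF K(1) x] subgroup.mem_carrier[OF K(2) m] .
  then have "x \<otimes> inv m \<in> H"
    using eq r_coset_eq_iff[OF subgroup_axioms] by simp
  moreover have "x \<otimes> inv m \<in> K"
    using subgroup.m_closed[OF K(1) x subgroup.m_inv_closed[OF K(1)]] m K(3) by blast
  ultimately have "x \<otimes> inv m \<in> M"
    using K(4) by blast
  then have "x \<otimes> inv m \<otimes> m \<in> M"
    using subgroup.m_closed[OF K(2) _ m] by blast
  then show ?thesis
    using xc mc by (simp add: m_assoc)
qed

lemma (in group_hom) image_subgroup_intermediate:
  assumes K: "subgroup K G" and M: "subgroup M G" "M \<subseteq> K"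
    and between: "\<And>L. subgroup L G \<Longrightarrow> M \<subseteq> L \<Longrightarrow> L \<subseteq> K \<Longrightarrow> L = M \<or> L = K"
    and L: "subgroup L H" "h ` M \<subseteq> L" "L \<subseteq> h ` K"
  shows "L = h ` M \<or> L = h ` K"
proof -
  define L' where "L' = K \<inter> {x \<in> carrier G. h x \<in> L}"
  have "subgroup L' G"
    unfolding L'_def by (intro G.subgroups_Inter_pair K subgroup_vimage L(1))
  moreover have "M \<subseteq> L'" "L' \<subseteq> K"
    unfolding L'_def using L(2) M subgroup.subset[OF M(1)] by auto
  ultimately have "L' = M \<or> L' = K"
    by (rule between)
  moreover have "h ` L' = L"
  proof
    show "h ` L' \<subseteq> L"
      unfolding L'_def by blast
    show "L \<subseteq> h ` L'"
    proof
      fix y assume "y \<in> L"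
      then obtain x where "x \<in> K" "y = h x"
        using L(3) by blast
      then show "y \<in> h ` L'"
        using \<open>y \<in> L\<close> subgroup.mem_carrier[OF K] unfolding L'_def by blast
    qed
  qed
  ultimately show ?thesis
    by blast
qed

lemma (in normal) FactGroup_subgroup_pow:
  assumes "a \<in> carrier G"
  shows "(H #> a) [^]\<^bsub>(G Mod H)\<lparr>carrier := A\<rparr>\<^esub> (n :: nat) = H #> (a [^] n)"
proof -
  have "(H #> a) [^]\<^bsub>(G Mod H)\<lparr>carrier := A\<rparr>\<^esub> n = (H #> a) [^]\<^bsub>G Mod H\<^esub> n"
    by (rule monoid.nat_pow_consistent[OF group.is_monoid[OF factorgroup_is_group], symmetric])
  also have "\<dots> = H #> (a [^] n)"
    by (rule FactGroup_pow[OF assms])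
  finally show ?thesis .
qed

lemma (in group) mult_generate_closed:
  assumes U: "U \<subseteq> carrier G" and V: "V \<subseteq> carrier G" "\<And>v. v \<in> V \<Longrightarrow> inv v \<in> V"
    and U_V: "\<And>u v. u \<in> U \<Longrightarrow> v \<in> V \<Longrightarrow> u \<otimes> v \<in> U"
    and g: "g \<in> generate G V" and u: "u \<in> U"
  shows "u \<otimes> g \<in> U"
  using g u
proof (induction arbitrary: u)
  case one
  then show ?case
    using U by auto
next
  case (incl h)
  then show ?case
    using U_V by blast
next
  case (inv h)
  then show ?case
    using U_V V(2) by blast
next
  case (eng h1 h2)
  then have "h1 \<in> carrier G" "h2 \<in> carrier G"
    using generate_in_carrier[OF V(1)] by blast+
  moreover have "u \<otimes> h1 \<otimes> h2 \<in> U"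
    using eng.IH eng.prems by blast
  ultimately show ?case
    using eng.prems U by (simp add: m_assoc subsetD)
qed

lemma (in group) rcosets_action:
  assumes H: "subgroup H G"
  shows "group_action G (rcosets H) (\<lambda>g. \<lambda>R \<in> rcosets H. R #> inv g)"
proof -
  have sub: "R \<subseteq> carrier G" if "R \<in> rcosets H" for R
    using subgroup.rcosets_carrier[OF H is_group that] .
  have closed: "R #> g \<in> rcosets H" if R: "R \<in> rcosets H" and g: "g \<in> carrier G" for R g
  proof -
    obtain c where "c \<in> carrier G" "R = H #> c"
      using R unfolding RCOSETS_def by blast
    then show ?thesis
      using g subgroup.subset[OF H] by (simp add: coset_mult_assoc rcosetsI)
  qed
  define \<phi> where "\<phi> = (\<lambda>g. \<lambda>R \<in> rcosets H. R #> inv g)"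
  have bij: "\<phi> g \<in> Bij (rcosets H)" if g: "g \<in> carrier G" for g
  proof -
    have "bij_betw (\<phi> g) (rcosets H) (rcosets H)"
      by (rule bij_betwI[where g = "\<lambda>R. R #> g"])
        (use g closed sub in \<open>simp_all add: \<phi>_def coset_mult_assoc\<close>)
    then show ?thesis
      unfolding Bij_def \<phi>_def by simp
  qed
  have mult: "\<phi> (g \<otimes> h) = compose (rcosets H) (\<phi> g) (\<phi> h)"
    if "g \<in> carrier G" "h \<in> carrier G" for g h
    unfolding \<phi>_def compose_def
    by (rule restrict_ext) (use that closed sub in \<open>simp add: coset_mult_assoc inv_mult_group\<close>)
  have "\<phi> \<in> hom G (BijGroup (rcosets H))"
    by (rule homI) (simp_all add: BijGroup_def bij mult)
  then have "group_hom G (BijGroup (rcosets H)) \<phi>"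
    by (simp add: group_hom_def group_hom_axioms_def is_group group_BijGroup)
  then show ?thesis
    unfolding group_action_def \<phi>_def .
qed

lemma (in group) normal_Inter_rcoset_stabilizers:
  assumes V: "subgroup V G"
  shows "(\<Inter>R \<in> rcosets V. {g \<in> carrier G. R #> inv g = R}) \<lhd> G"
proof -
  define \<phi> where "\<phi> = (\<lambda>g. \<lambda>R \<in> rcosets V. R #> inv g)"
  have "\<phi> g = (\<lambda>R \<in> rcosets V. R) \<longleftrightarrow> (\<forall>R \<in> rcosets V. R #> inv g = R)" for g
    unfolding \<phi>_def by (metis (no_types, lifting) restrict_apply' restrict_ext)
  then have "(\<Inter>R \<in> rcosets V. {g \<in> carrier G. R #> inv g = R}) = kernel G (BijGroup (rcosets V)) \<phi>"
    unfolding kernel_def using subgroup.subgroup_in_rcosets[OF V is_group] by (auto simp: BijGroup_def)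
  then show ?thesis
    using rcosets_action[OF V] unfolding \<phi>_def group_action_def
    by (simp add: group_hom.normal_kernel)
qed

lemma (in group_action) prime_dvd_card_orbit:
  assumes ord: "order G = p ^ m" and p: "prime p" and E: "finite E" and x: "x \<in> E"
    and moved: "g \<in> carrier G" "\<phi> g x \<noteq> x"
  shows "p dvd card (orbit G \<phi> x)"
proof -
  obtain i where i: "card (orbit G \<phi> x) = p ^ i"
    using orbit_stabilizer_theorem[OF x] ord divides_primepow_nat[OF p] by (metis dvd_triv_left)
  have "orbit G \<phi> x \<subseteq> E"
    using x element_image unfolding orbit_def by blast
  then have "card {x, \<phi> g x} \<le> card (orbit G \<phi> x)"
    using orbit_refl[OF x] moved(1) E by (intro card_mono) (auto simp: orbit_def intro: finite_subset)
  then have "i \<noteq> 0"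
    using moved(2) i by (cases i) auto
  then show ?thesis
    using i by (simp add: dvd_power)
qed

lemma (in group_action) card_fixed_points_mod_prime:
  assumes ord: "order G = p ^ m" and p: "prime p" and E: "finite E"
  shows "card {x \<in> E. \<forall>g \<in> carrier G. \<phi> g x = x} mod p = card E mod p"
proof -
  define F where "F = {x \<in> E. \<forall>g \<in> carrier G. \<phi> g x = x}"
  have orbit_subset: "orbit G \<phi> x \<subseteq> E" if "x \<in> E" for x
    using that element_image unfolding orbit_def by blast
  have orbit_fixed: "orbit G \<phi> x = {x}" if "x \<in> F" for x
    using that orbit_refl[of x] unfolding F_def orbit_def by auto
  have dvd_card_orbit_diff: "p dvd card (orb - F)" if orb: "orb \<in> orbits G E \<phi>" for orb
  proof -
    obtain x where x: "x \<in> E" "orb = orbit G \<phi> x"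
      using orb unfolding orbits_def by blast
    show ?thesis
    proof (cases "x \<in> F")
      case True
      then show ?thesis
        using x orbit_fixed by simp
    next
      case False
      have "orb \<inter> F = {}"
        using x False orbit_fixed orbit_subset orbit_sym by (metis disjoint_iff singletonD subsetD)
      moreover obtain g where "g \<in> carrier G" "\<phi> g x \<noteq> x"
        using x False unfolding F_def by blast
      ultimately show ?thesis
        using x prime_dvd_card_orbit[OF ord p E] by (simp add: Diff_triv)
    qed
  qed
  have "card (E - F) = (\<Sum>x \<in> E. of_bool (x \<notin> F))"
    using E by (simp add: Diff_eq Compl_eq)
  also have "\<dots> = (\<Sum>orb \<in> orbits G E \<phi>. \<Sum>x \<in> orb. of_bool (x \<notin> F))"
    by (rule disjoint_sum[OF E, symmetric])
  also have "\<dots> = (\<Sum>orb \<in> orbits G E \<phi>. card (orb - F))"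
  proof (rule sum.cong)
    fix orb assume "orb \<in> orbits G E \<phi>"
    then have "finite orb"
      using orbit_subset E unfolding orbits_def by (auto intro: finite_subset)
    then show "(\<Sum>x \<in> orb. of_bool (x \<notin> F)) = card (orb - F)"
      by (simp add: Diff_eq Compl_eq)
  qed simp
  finally have "p dvd card (E - F)"
    using dvd_card_orbit_diff by (simp add: dvd_sum)
  moreover have "card E = card F + card (E - F)"
    using E by (simp add: F_def card_Diff_subset card_mono)
  ultimately show ?thesis
    unfolding F_def by (auto elim!: dvdE)
qed

section \<open>Maximal subgroups of finite \<open>p\<close>-groups\<close>

lemma (in group) card_subgroup_of_p_group:
  assumes ord: "order G = p ^ n" and p: "prime p" and B: "subgroup B G"
  obtains j where "card B = p ^ j"
  using lagrange[OF B] ord divides_primepow_nat[OF p] by (metis dvd_triv_right)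

lemma (in group) prime_dvd_index_proper_subgroup:
  assumes fin: "finite (carrier G)" and ord: "order G = p ^ n" and p: "prime p"
    and B: "subgroup B G" "B \<noteq> carrier G"
  shows "p dvd card (rcosets B)"
proof -
  have lagr: "card (rcosets B) * card B = p ^ n"
    using lagrange[OF B(1)] ord by simp
  then obtain i where i: "card (rcosets B) = p ^ i"
    using divides_primepow_nat[OF p] by (metis dvd_triv_left)
  have "card (rcosets B) \<noteq> 1"
  proof
    assume "card (rcosets B) = 1"
    then have "card B = card (carrier G)"
      using lagr ord by (simp add: order_def)
    then show False
      using card_subset_eq[OF fin subgroup.subset[OF B(1)]] B(2) by simp
  qed
  then show ?thesis
    using i by (cases i) auto
qed

lemma (in group) mem_normalizer_iff:
  "B \<subseteq> carrier G \<Longrightarrow> x \<in> normalizer G B \<longleftrightarrow> x \<in> carrier G \<and> x <# B #> inv x = B"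
  unfolding normalizer_def stabilizer_def by auto

lemma (in group) subgroup_subset_normalizer:
  assumes B: "subgroup B G"
  shows "B \<subseteq> normalizer G B"
proof
  fix b assume b: "b \<in> B"
  have "(\<lambda>c. b \<otimes> c \<otimes> inv b) ` B = B"
  proof
    show "(\<lambda>c. b \<otimes> c \<otimes> inv b) ` B \<subseteq> B"
      using b B by (auto intro!: subgroup.m_closed[OF B] subgroup.m_inv_closed[OF B])
    show "B \<subseteq> (\<lambda>c. b \<otimes> c \<otimes> inv b) ` B"
    proof
      fix c assume c: "c \<in> B"
      have "c = b \<otimes> (inv b \<otimes> c \<otimes> b) \<otimes> inv b"
        using b c subgroup.mem_carrier[OF B] by (simp add: group_normalize)
      moreover have "inv b \<otimes> c \<otimes> b \<in> B"
        using b c by (intro subgroup.m_closed[OF B] subgroup.m_inv_closed[OF B])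
      ultimately show "c \<in> (\<lambda>c. b \<otimes> c \<otimes> inv b) ` B"
        by blast
    qed
  qed
  then show "b \<in> normalizer G B"
    using b subgroup.mem_carrier[OF B] subgroup.subset[OF B] by (simp add: mem_normalizer_iff conjugate_eq_image)
qed

lemma (in group) normal_if_normalizer_eq_carrier:
  assumes B: "subgroup B G" and "normalizer G B = carrier G"
  shows "B \<lhd> G"
  unfolding normal_inv_iff
proof (intro conjI B ballI)
  fix x b assume "x \<in> carrier G" "b \<in> B"
  then have "x <# B #> inv x = B"
    using assms mem_normalizer_iff[OF subgroup.subset[OF B]] by blast
  then show "x \<otimes> b \<otimes> inv x \<in> B"
    using \<open>x \<in> carrier G\<close> \<open>b \<in> B\<close> conjugate_eq_image by blast
qed

lemma (in group) p_group_fixed_rcoset: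
  assumes fin: "finite (carrier G)" and ord: "order G = p ^ n" and p: "prime p"
    and B: "subgroup B G" "B \<noteq> carrier G"
  obtains x where "x \<in> carrier G" "x \<notin> B" "\<And>b. b \<in> B \<Longrightarrow> B #> x #> b = B #> x"
proof -
  interpret B: subgroup B G by (rule B(1))
  \<comment> \<open>\<open>B\<close> acts on its right cosets; the number of fixed cosets is \<open>\<equiv> [G : B] \<equiv> 0 (mod p)\<close>
    and \<open>B\<close> itself is one of them.\<close>
  define \<phi> where "\<phi> = (\<lambda>g. \<lambda>R \<in> rcosets B. R #> inv g)"
  define Fix where "Fix = {C \<in> rcosets B. \<forall>b \<in> B. \<phi> b C = C}"
  have act: "group_action (G\<lparr>carrier := B\<rparr>) (rcosets B) \<phi>"
    unfolding \<phi>_def by (rule group_action.induced_action[OF rcosets_action[OF B(1)] B(1)])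
  have finX: "finite (rcosets B)"
    using rcosets_subset_PowG[OF B(1)] fin by (simp add: finite_subset)
  obtain j where "card B = p ^ j"
    using card_subgroup_of_p_group[OF ord p B(1)] .
  then have "card Fix mod p = card (rcosets B) mod p"
    using group_action.card_fixed_points_mod_prime[OF act _ p finX]
    by (simp add: Fix_def order_def)
  then have "p dvd card Fix"
    using prime_dvd_index_proper_subgroup[OF fin ord p B] by (simp add: dvd_eq_mod_eq_0)
  moreover have "B \<in> Fix"
    using B.subgroup_in_rcosets[OF is_group] B.rcos_const[OF is_group] unfolding Fix_def \<phi>_def by simp
  moreover have "finite Fix"
    using finX by (simp add: Fix_def)
  ultimately have "2 \<le> card Fix"
    using prime_ge_2_nat[OF p] by (metis card_0_eq dvd_imp_le empty_iff le_trans not_gr0)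
  then have "Fix \<noteq> {B}"
    by auto
  then obtain C where "C \<in> Fix" "C \<noteq> B"
    using \<open>B \<in> Fix\<close> by blast
  then have C: "C \<in> rcosets B" "\<And>b. b \<in> B \<Longrightarrow> C #> inv b = C" "C \<noteq> B"
    unfolding Fix_def \<phi>_def by auto
  then obtain x where x: "x \<in> carrier G" "C = B #> x"
    unfolding RCOSETS_def by blast
  have "x \<notin> B"
    using C(3) x B.rcos_const[OF is_group] by blast
  moreover have "B #> x #> b = B #> x" if "b \<in> B" for b
    using C(2)[of "inv b"] that x(2) B.subset by (simp add: subsetD)
  ultimately show thesis
    using that x(1) by blast
qed

lemma (in group) p_group_normalizer_psubset:
  assumes fin: "finite (carrier G)" and ord: "order G = p ^ n" and p: "prime p"
    and B: "subgroup B G" "B \<noteq> carrier G"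
  shows "B \<subset> normalizer G B"
proof -
  interpret B: subgroup B G by (rule B(1))
  obtain x where x: "x \<in> carrier G" "x \<notin> B" and fixed: "\<And>b. b \<in> B \<Longrightarrow> B #> x #> b = B #> x"
    using p_group_fixed_rcoset[OF fin ord p B] by blast
  have "x <# B #> inv x \<subseteq> B"
  proof (clarsimp simp: conjugate_eq_image[OF x(1)])
    fix b assume b: "b \<in> B"
    have "x \<otimes> b \<in> B #> x #> b"
      using rcos_self[OF x(1) B(1)] b unfolding r_coset_def by blast
    then obtain b' where "b' \<in> B" "x \<otimes> b = b' \<otimes> x"
      using fixed[OF b] unfolding r_coset_def by auto
    then show "x \<otimes> b \<otimes> inv x \<in> B"
      using x(1) b B.subset by (simp add: m_assoc subsetD)
  qed
  moreover have "card (x <# B #> inv x) = card B"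
    unfolding conjugate_eq_image[OF x(1)]
    by (rule card_image) (use x(1) B.subset in \<open>auto simp: inj_on_def subsetD\<close>)
  moreover have "finite B"
    using fin B.subset finite_subset by blast
  ultimately have "x \<in> normalizer G B"
    using card_subset_eq x(1) B.subset by (simp add: mem_normalizer_iff)
  then show ?thesis
    using subgroup_subset_normalizer[OF B(1)] x(2) by blast
qed

definition maximal_subgroup :: "('a, 'b) monoid_scheme \<Rightarrow> 'a set \<Rightarrow> bool" where
  "maximal_subgroup G B \<longleftrightarrow> subgroup B G \<and> B \<noteq> carrier G \<and>
     (\<forall>L. subgroup L G \<and> B \<subseteq> L \<longrightarrow> L = B \<or> L = carrier G)"

lemma (in group) maximal_subgroup_of_p_group_normal:
  assumes fin: "finite (carrier G)" and ord: "order G = p ^ n" and p: "prime p"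
    and B: "maximal_subgroup G B"
  shows "B \<lhd> G"
proof -
  have B_sub: "subgroup B G" "B \<noteq> carrier G"
    and max: "\<And>L. subgroup L G \<Longrightarrow> B \<subseteq> L \<Longrightarrow> L = B \<or> L = carrier G"
    using B unfolding maximal_subgroup_def by blast+
  have "B \<subset> normalizer G B"
    by (rule p_group_normalizer_psubset[OF fin ord p B_sub])
  then have "normalizer G B = carrier G"
    using max[OF normalizer_imp_subgroup[OF subgroup.subset[OF B_sub(1)]]] by blast
  then show ?thesis
    by (rule normal_if_normalizer_eq_carrier[OF B_sub(1)])
qed

lemma (in group) p_group_mem_if_coprime_int_pow:
  fixes m :: int
  assumes ord: "order G = p ^ n" and B: "subgroup B G" and a: "a \<in> carrier G"
    and "a [^] m \<in> B" and "coprime m (int p)"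
  shows "a \<in> B"
proof -
  have "a [^] (int p ^ n) \<in> B"
    using pow_order_eq_1[OF a] ord subgroup.one_closed[OF B]
    by (simp add: int_pow_int[of G a "p ^ n", simplified])
  moreover have "coprime m (int p ^ n)"
    using \<open>coprime m (int p)\<close> by simp
  ultimately show ?thesis
    using coprime_int_pows_in_subgroup[OF B a \<open>a [^] m \<in> B\<close>] by blast
qed

lemma coprime_one_minus_mult: "coprime (1 - a * b) (a :: 'a :: {comm_ring_1, algebraic_semidom})"
proof (rule coprimeI)
  fix c assume "c dvd 1 - a * b" "c dvd a"
  then have "c dvd (1 - a * b) + a * b"
    by (intro dvd_add dvd_mult2)
  then show "is_unit c"
    by simp
qed

lemma (in group) maximal_subgroup_of_p_group_pow_mem:
  assumes fin: "finite (carrier G)" and ord: "order G = p ^ n" and p: "prime p"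
    and B: "maximal_subgroup G B" and a: "a \<in> carrier G"
  shows "a [^] p \<in> B"
proof -
  have sub: "subgroup B G"
    and max: "\<And>L. subgroup L G \<Longrightarrow> B \<subseteq> L \<Longrightarrow> L = B \<or> L = carrier G"
    using B unfolding maximal_subgroup_def by blast+
  \<comment> \<open>As \<open>B\<close> is normal, \<open>D = B \<langle>a\<^sup>p\<rangle>\<close> is a subgroup. If \<open>D = G\<close>, then
    \<open>a [^] (1 - p * k) \<in> B\<close> for some \<open>k\<close>, and \<open>1 - p * k\<close> is prime to \<open>order G\<close>.\<close>
  define D where "D = B <#> generate G {a [^] p}"
  have "subgroup D G"
    unfolding D_def
    by (rule mult_norm_subgroup[OF maximal_subgroup_of_p_group_normal[OF fin ord p B] generate_is_subgroup])
      (use a in simp)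
  have "B \<subseteq> D"
  proof
    fix b assume "b \<in> B"
    then have "b \<otimes> \<one> \<in> D"
      using generate.one unfolding D_def set_mult_def by blast
    then show "b \<in> D"
      using subgroup.mem_carrier[OF sub \<open>b \<in> B\<close>] by simp
  qed
  have "\<one> \<otimes> a [^] p \<in> D"
    using generate.incl[of "a [^] p" "{a [^] p}" G] subgroup.one_closed[OF sub]
    unfolding D_def set_mult_def by blast
  then have "a [^] p \<in> D"
    using a by simp
  show ?thesis
  proof (cases "D = B")
    case True
    then show ?thesis
      using \<open>a [^] p \<in> D\<close> by simp
  next
    case False
    then have "a \<in> D"
      using max[OF \<open>subgroup D G\<close> \<open>B \<subseteq> D\<close>] a by simp
    then obtain b k where b: "b \<in> B" and a_eq: "a = b \<otimes> (a [^] p) [^] (k :: int)"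
      unfolding D_def set_mult_def generate_pow[OF nat_pow_closed[OF a]] by blast
    have "a [^] (1 - int p * k) = b"
      using a b a_eq subgroup.mem_carrier[OF sub]
      by (simp add: int_pow_diff int_pow_pow int_pow_int[symmetric] inv_solve_right' del: pow_nat)
    then have "a [^] (1 - int p * k) \<in> B"
      using b by simp
    moreover have "coprime (1 - int p * k) (int p)"
      by (rule coprime_one_minus_mult)
    ultimately have "a \<in> B"
      by (rule p_group_mem_if_coprime_int_pow[OF ord sub a])
    then show ?thesis
      by (rule subgroup_nat_pow_closed[OF sub])
  qed
qed

section \<open>Topological groups\<close>

lemma clopen_nbhd_of_singleton_component:
  assumes "compact_space X" "Hausdorff_space X" "connected_component_of_set X a = {a}"
    and "openin X W" "a \<in> W"
  obtains U where "openin X U" "closedin X U" "a \<in> U" "U \<subseteq> W"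
proof -
  have a: "a \<in> topspace X"
    using assms(4,5) openin_subset by blast
  then have "{a} \<in> connected_components_of X"
    using assms(3) unfolding connected_components_of_def by (metis image_eqI)
  then obtain U V where UV: "openin X U" "openin X V" "disjnt U V" "U \<union> V = topspace X"
    "{a} \<subseteq> U" "U \<subseteq> W"
    using wilder_locally_compact_component_thm[OF compact_imp_locally_compact_space[OF assms(1)] assms(2)]
      a assms(4,5) by (metis compactin_sing empty_subsetI insert_subset)
  have "topspace X - U = V"
    using UV(3,4) by (auto simp: disjnt_def)
  then have "closedin X U"
    unfolding closedin_def using UV(1,2) openin_subset[OF UV(1)] by simp
  then show thesis
    using that UV by blast
qed

locale topological_group = group G for G :: "('a, 'b) monoid_scheme" (structure) +
  fixes T :: "'a topology"
  assumes topspace_eq: "topspace T = carrier G"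
    and continuous_mult: "continuous_map (prod_topology T T) T (\<lambda>(x, y). x \<otimes> y)"
    and continuous_inv: "continuous_map T T (\<lambda>x. inv x)"

lemma topgroup_imp_topological_group: "topgroup G T \<Longrightarrow> topological_group G T"
  unfolding topgroup_def topological_group_def topological_group_axioms_def by blast

context topological_group
begin

lemma continuous_map_group_mult:
  assumes "continuous_map X T f" "continuous_map X T g"
  shows "continuous_map X T (\<lambda>x. f x \<otimes> g x)"
  using continuous_map_compose[OF continuous_map_pairedI[OF assms] continuous_mult]
  by (simp add: o_def)

lemma continuous_map_group_inv:
  "continuous_map X T f \<Longrightarrow> continuous_map X T (\<lambda>x. inv (f x))"
  using continuous_map_compose[OF _ continuous_inv] by (simp add: o_def)

lemma continuous_map_group_const: "c \<in> carrier G \<Longrightarrow> continuous_map X T (\<lambda>x. c)"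
  by (simp add: topspace_eq)

lemma openin_group_preimage:
  "continuous_map T T f \<Longrightarrow> openin T U \<Longrightarrow> openin T {x \<in> carrier G. f x \<in> U}"
  using openin_continuous_map_preimage[of T T f U] by (simp add: topspace_eq)

lemma closedin_group_preimage:
  "continuous_map T T f \<Longrightarrow> closedin T U \<Longrightarrow> closedin T {x \<in> carrier G. f x \<in> U}"
  using closedin_continuous_map_preimage[of T T f U] by (simp add: topspace_eq)

lemma continuous_map_l_mult: "g \<in> carrier G \<Longrightarrow> continuous_map T T (\<lambda>x. g \<otimes> x)"
  by (intro continuous_map_group_mult continuous_map_group_const continuous_map_id[unfolded id_def])

lemma continuous_map_r_mult: "g \<in> carrier G \<Longrightarrow> continuous_map T T (\<lambda>x. x \<otimes> g)"
  by (intro continuous_map_group_mult continuous_map_group_const continuous_map_id[unfolded id_def])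

lemma openin_r_coset: "subgroup H G \<Longrightarrow> openin T H \<Longrightarrow> g \<in> carrier G \<Longrightarrow> openin T (H #> g)"
  by (simp add: r_coset_eq_preimage openin_group_preimage continuous_map_r_mult)

lemma closedin_r_coset: "subgroup H G \<Longrightarrow> closedin T H \<Longrightarrow> g \<in> carrier G \<Longrightarrow> closedin T (H #> g)"
  by (simp add: r_coset_eq_preimage closedin_group_preimage continuous_map_r_mult)

lemma openin_subtopology_l_coset:
  assumes H: "subgroup H G" and L: "subgroup L G" "openin (subtopology T H) L" and x: "x \<in> H"
  shows "openin (subtopology T H) (x <# L)"
proof -
  obtain W where W: "openin T W" "L = W \<inter> H"
    using L(2) unfolding openin_subtopology by blast
  have xc: "x \<in> carrier G"
    using x subgroup.mem_carrier[OF H] by blast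
  have mem_H: "y \<in> H" if y: "y \<in> carrier G" "inv x \<otimes> y \<in> H" for y
  proof -
    have "x \<otimes> (inv x \<otimes> y) \<in> H"
      using subgroup.m_closed[OF H x y(2)] .
    then show "y \<in> H"
      using xc y by (simp add: m_inv_cancel_left)
  qed
  have "{y \<in> carrier G. inv x \<otimes> y \<in> L} = {y \<in> carrier G. inv x \<otimes> y \<in> W} \<inter> H"
    using W(2) mem_H subgroup.m_closed[OF H subgroup.m_inv_closed[OF H x]] by auto
  then have "x <# L = {y \<in> carrier G. inv x \<otimes> y \<in> W} \<inter> H"
    by (simp add: l_coset_eq_preimage[OF L(1) xc])
  moreover have "openin T {y \<in> carrier G. inv x \<otimes> y \<in> W}"
    using xc W(1) by (simp add: openin_group_preimage continuous_map_l_mult)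
  ultimately show ?thesis
    unfolding openin_subtopology by blast
qed

lemma openin_subtopology_subgroup_superset:
  assumes H: "subgroup H G" and L: "subgroup L G" "openin (subtopology T H) L"
    and L': "subgroup L' G" "L \<subseteq> L'" "L' \<subseteq> H"
  shows "openin (subtopology T H) L'"
proof -
  have "L' = (\<Union>x \<in> L'. x <# L)"
  proof
    show "L' \<subseteq> (\<Union>x \<in> L'. x <# L)"
      using lcos_self[OF subgroup.mem_carrier[OF L'(1)] L(1)] by blast
    show "(\<Union>x \<in> L'. x <# L) \<subseteq> L'"
      using L'(1,2) by (auto simp: l_coset_def intro: subgroup.m_closed)
  qed
  also have "openin (subtopology T H) \<dots>"
    using L L'(2,3) H by (intro openin_Union) (auto intro: openin_subtopology_l_coset)
  finally show ?thesis .
qed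

lemma closedin_open_subgroup:
  assumes H: "subgroup H G" "closedin T H"
    and L: "subgroup L G" "L \<subseteq> H" "openin (subtopology T H) L"
  shows "closedin T L"
proof -
  have "H - L = (\<Union>x \<in> H - L. x <# L)"
  proof
    show "H - L \<subseteq> (\<Union>x \<in> H - L. x <# L)"
      using lcos_self[OF subgroup.mem_carrier[OF H(1)] L(1)] by blast
    have "x <# L \<subseteq> H - L" if "x \<in> H - L" for x
    proof -
      have "x <# L \<subseteq> H"
        using that L(2) H(1) by (auto simp: l_coset_def intro: subgroup.m_closed)
      moreover have "y \<notin> L" if "y \<in> x <# L" for y
      proof
        assume "y \<in> L"
        obtain l where "l \<in> L" "y = x \<otimes> l"
          using \<open>y \<in> x <# L\<close> unfolding l_coset_def by blast
        then have "x = y \<otimes> inv l"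
          using \<open>x \<in> H - L\<close> H(1) L(1) by (simp add: m_assoc subgroup.mem_carrier)
        then show False
          using \<open>x \<in> H - L\<close> \<open>y \<in> L\<close> \<open>l \<in> L\<close> L(1) by (simp add: subgroup.m_closed subgroup.m_inv_closed)
      qed
      ultimately show ?thesis
        by blast
    qed
    then show "(\<Union>x \<in> H - L. x <# L) \<subseteq> H - L"
      by blast
  qed
  also have "openin (subtopology T H) \<dots>"
    using H(1) L by (intro openin_Union) (auto intro: openin_subtopology_l_coset)
  finally have "closedin (subtopology T H) L"
    using L(2) H(1) topspace_eq subgroup.subset[OF H(1)]
    by (simp add: closedin_def Int_absorb1)
  then show ?thesis
    using H(2) closedin_trans_full by blast
qed

lemma subgroup_closure_of:
  assumes A: "subgroup A G"
  shows "subgroup (T closure_of A) G"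
proof -
  let ?C = "T closure_of A"
  have C_carrier: "?C \<subseteq> carrier G"
    using closure_of_subset_topspace[of T A] topspace_eq by simp
  have A_C: "A \<subseteq> ?C"
    using subgroup.subset[OF A] by (simp add: closure_of_subset topspace_eq)
  have l_mult: "a \<otimes> c \<in> ?C" if a: "a \<in> A" and c: "c \<in> ?C" for a c
  proof -
    have "a \<in> carrier G"
      using a subgroup.subset[OF A] by blast
    then have "(\<lambda>x. a \<otimes> x) ` ?C \<subseteq> T closure_of ((\<lambda>x. a \<otimes> x) ` A)"
      by (rule continuous_map_image_closure_subset[OF continuous_map_l_mult])
    also have "\<dots> \<subseteq> ?C"
      by (rule closure_of_mono) (use a subgroup.m_closed[OF A] in blast)
    finally show ?thesis
      using c by blast
  qed
  have r_mult: "d \<otimes> c \<in> ?C" if d: "d \<in> ?C" and c: "c \<in> ?C" for d c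
  proof -
    have "c \<in> carrier G"
      using c C_carrier by blast
    then have "(\<lambda>x. x \<otimes> c) ` ?C \<subseteq> T closure_of ((\<lambda>x. x \<otimes> c) ` A)"
      by (rule continuous_map_image_closure_subset[OF continuous_map_r_mult])
    also have "\<dots> \<subseteq> T closure_of ?C"
      by (rule closure_of_mono) (use l_mult c in blast)
    also have "\<dots> = ?C"
      by (rule closure_of_closure_of)
    finally show ?thesis
      using d by blast
  qed
  have inverse: "inv c \<in> ?C" if c: "c \<in> ?C" for c
  proof -
    have "(\<lambda>x. inv x) ` ?C \<subseteq> T closure_of ((\<lambda>x. inv x) ` A)"
      by (rule continuous_map_image_closure_subset[OF continuous_inv])
    also have "\<dots> \<subseteq> ?C"
      by (rule closure_of_mono) (use subgroup.m_inv_closed[OF A] in blast)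
    finally show ?thesis
      using c by blast
  qed
  show ?thesis
  proof (rule subgroupI)
    show "?C \<noteq> {}"
      using A_C subgroup.one_closed[OF A] by blast
  qed (use C_carrier r_mult inverse in auto)
qed

lemma frattini_eq_Inter: "frattini G T H = \<Inter> (insert H {M. maximal_open_subgroup G T H M})"
  unfolding frattini_def by blast

lemma subgroup_frattini: "subgroup H G \<Longrightarrow> subgroup (frattini G T H) G"
  unfolding frattini_eq_Inter maximal_open_subgroup_def by (rule subgroups_Inter) auto

lemma closedin_frattini:
  assumes "subgroup H G" "closedin T H"
  shows "closedin T (frattini G T H)"
  unfolding frattini_eq_Inter
proof (rule closedin_Inter)
  show "closedin T M" if "M \<in> insert H {M. maximal_open_subgroup G T H M}" for M
    using that assms closedin_open_subgroup[OF assms]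
    unfolding maximal_open_subgroup_def by blast
qed simp

lemma closure_cyclic_subset_r_cosets:
  fixes n :: nat
  assumes D: "subgroup D G" "closedin T D" and x: "x \<in> carrier G" "x [^] n \<in> D" and "n > 0"
  shows "T closure_of generate G {x} \<subseteq> (\<Union>i < n. D #> x [^] i)"
proof (rule closure_of_minimal)
  show "closedin T (\<Union>i < n. D #> x [^] i)"
    using D x by (intro closedin_Union) (auto simp: closedin_r_coset)
  show "generate G {x} \<subseteq> (\<Union>i < n. D #> x [^] i)"
  proof
    fix y assume "y \<in> generate G {x}"
    then obtain k :: int where y: "y = x [^] k"
      using generate_pow[OF x(1)] by blast
    define q r where "q = k div int n" and "r = k mod int n"
    have r: "0 \<le> r" "r < int n"
      using \<open>n > 0\<close> by (simp_all add: r_def)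
    have "y = (x [^] n) [^] q \<otimes> x [^] nat r"
      using x(1) r(1)
      by (simp add: y int_pow_pow int_pow_mult[symmetric] q_def r_def int_pow_int[symmetric] del: pow_nat)
    moreover have "(x [^] n) [^] q \<in> D"
      using D(1) x(2) by (rule subgroup_int_pow_closed)
    ultimately have "y \<in> D #> x [^] nat r"
      unfolding r_coset_def by blast
    moreover have "nat r < n"
      using r by simp
    ultimately show "y \<in> (\<Union>i < n. D #> x [^] i)"
      by blast
  qed
qed

lemma openin_closed_subgroup_finite_cover:
  assumes D: "subgroup D G" "closedin T D" "D \<subseteq> C"
    and S: "finite S" "S \<subseteq> carrier G" "C \<subseteq> (\<Union>g \<in> S. D #> g)"
  shows "openin (subtopology T C) D"
proof -
  define K where "K = (\<Union>g \<in> S - D. D #> g)"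
  have "closedin T K"
    unfolding K_def using D S by (intro closedin_Union) (auto intro: closedin_r_coset)
  have disjoint: "(D #> g) \<inter> D = {}" if "g \<in> carrier G" "g \<notin> D" for g
  proof -
    have "d \<otimes> g \<notin> D" if "d \<in> D" for d
    proof
      assume "d \<otimes> g \<in> D"
      then have "inv d \<otimes> (d \<otimes> g) \<in> D"
        using D(1) \<open>d \<in> D\<close> by (simp add: subgroup.m_closed subgroup.m_inv_closed)
      then show False
        using \<open>g \<notin> D\<close> \<open>g \<in> carrier G\<close> \<open>d \<in> D\<close> D(1)
        by (simp add: inv_m_cancel_left subgroup.mem_carrier)
    qed
    then show ?thesis
      unfolding r_coset_def by blast
  qed
  have "D = (topspace T - K) \<inter> C"
  proof
    show "D \<subseteq> (topspace T - K) \<inter> C"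
      using D(3) disjoint S(2) subgroup.subset[OF D(1)] topspace_eq unfolding K_def by blast
    show "(topspace T - K) \<inter> C \<subseteq> D"
    proof
      fix y assume y: "y \<in> (topspace T - K) \<inter> C"
      then obtain g where g: "g \<in> S" "y \<in> D #> g"
        using S(3) by blast
      then have "g \<in> D"
        using y unfolding K_def by blast
      then show "y \<in> D"
        using g subgroup.rcos_const[OF D(1) is_group] by simp
    qed
  qed
  then show ?thesis
    using \<open>closedin T K\<close> unfolding openin_subtopology closedin_def by blast
qed

lemma maximal_open_subgroup_of_closure_cyclic:
  fixes p :: nat
  assumes p: "prime p" and x: "x \<in> carrier G"
    and D: "subgroup D G" "closedin T D" "D \<subset> T closure_of generate G {x}" "x [^] p \<in> D"
  shows "maximal_open_subgroup G T (T closure_of generate G {x}) D"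
proof -
  define C where "C = T closure_of generate G {x}"
  have C: "subgroup C G" "closedin T C"
    unfolding C_def using x by (simp_all add: subgroup_closure_of generate_is_subgroup)
  have cover: "C \<subseteq> (\<Union>i < p. D #> x [^] i)"
    unfolding C_def using D x prime_gt_0_nat[OF p] by (intro closure_cyclic_subset_r_cosets) auto
  have "openin (subtopology T C) D"
  proof (rule openin_closed_subgroup_finite_cover[where S = "(\<lambda>i. x [^] i) ` {..<p}"])
    show "C \<subseteq> (\<Union>g \<in> (\<lambda>i. x [^] i) ` {..<p}. D #> g)"
      using cover by simp
  qed (use D x in \<open>auto simp: C_def\<close>)
  moreover have "L = D"
    if L: "subgroup L G" "D \<subseteq> L" "L \<subset> C" "openin (subtopology T C) L" for L
  proof -
    have "x \<notin> L"
    proof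
      assume "x \<in> L"
      then have "generate G {x} \<subseteq> L"
        using generate_subgroup_incl[OF _ L(1)] by simp
      then have "C \<subseteq> L"
        unfolding C_def
        by (rule closure_of_minimal) (rule closedin_open_subgroup[OF C L(1) _ L(4)], use L(3) in blast)
      then show False
        using L(3) by blast
    qed
    then have "L \<subseteq> D"
      using subgroup_subset_if_pow_cosets_cover[OF p D(1) L(1,2) x _ D(4)] cover L(3) by blast
    then show "L = D"
      using L(2) by blast
  qed
  ultimately show ?thesis
    using D unfolding maximal_open_subgroup_def C_def by blast
qed

lemma frattini_closure_cyclic_subset:
  fixes p :: nat
  assumes p: "prime p" and H: "subgroup H G" "closedin T H"
    and x: "x \<in> carrier G" "x [^] p \<in> frattini G T H"
  shows "frattini G T (T closure_of generate G {x}) \<subseteq> frattini G T H"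
proof -
  define C where "C = T closure_of generate G {x}"
  define D where "D = C \<inter> frattini G T H"
  have "generate G {x} \<subseteq> C"
    unfolding C_def using generate_is_subgroup[of "{x}"] x(1)
    by (intro closure_of_subset) (simp add: subgroup.subset topspace_eq)
  moreover have "x [^] p \<in> generate G {x}"
    using x(1) generate.incl[of x "{x}" G] by (simp add: subgroup_nat_pow_closed generate_is_subgroup)
  ultimately have "x [^] p \<in> D"
    unfolding D_def using x(2) by blast
  have D: "subgroup D G" "closedin T D" "D \<subseteq> C"
    unfolding D_def C_def
    using H x(1) subgroup_closure_of[OF generate_is_subgroup]
    by (auto intro: subgroups_Inter_pair subgroup_frattini closedin_Int closedin_frattini)
  show ?thesis
  proof (cases "D = C")
    case True
    then show ?thesis
      unfolding D_def frattini_def C_def by blast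
  next
    case False
    then have "maximal_open_subgroup G T C D"
      unfolding C_def using D \<open>x [^] p \<in> D\<close>
      by (intro maximal_open_subgroup_of_closure_cyclic[OF p x(1)]) (auto simp: C_def)
    then show ?thesis
      unfolding frattini_def D_def C_def by blast
  qed
qed

lemma fg_subgroup_closure_cyclic:
  assumes "x \<in> carrier G"
  shows "fg_subgroup G T (T closure_of generate G {x})" "x \<in> T closure_of generate G {x}"
proof -
  have "x \<in> generate G {x}"
    by (rule generate.incl) simp
  moreover have "generate G {x} \<subseteq> T closure_of generate G {x}"
    using generate_is_subgroup[of "{x}"] assms
    by (intro closure_of_subset) (simp add: subgroup.subset topspace_eq)
  ultimately show "x \<in> T closure_of generate G {x}"
    by blast
  then show "fg_subgroup G T (T closure_of generate G {x})"
    unfolding fg_subgroup_def closed_subgroup_def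
    using assms subgroup_closure_of[OF generate_is_subgroup, of "{x}"]
    by (intro conjI exI[of _ "{x}"]) auto
qed

lemma openin_subgroup_if_nbhd_subset:
  assumes S: "subgroup S G" and V: "openin T V" "\<one> \<in> V" "V \<subseteq> S"
  shows "openin T S"
proof -
  have "S = (\<Union>s \<in> S. {y \<in> carrier G. inv s \<otimes> y \<in> V})"
  proof
    show "S \<subseteq> (\<Union>s \<in> S. {y \<in> carrier G. inv s \<otimes> y \<in> V})"
    proof
      fix s assume "s \<in> S"
      then have "s \<in> carrier G" "inv s \<otimes> s \<in> V"
        using subgroup.mem_carrier[OF S] V(2) by auto
      then show "s \<in> (\<Union>s \<in> S. {y \<in> carrier G. inv s \<otimes> y \<in> V})"
        using \<open>s \<in> S\<close> by blast
    qed
    show "(\<Union>s \<in> S. {y \<in> carrier G. inv s \<otimes> y \<in> V}) \<subseteq> S"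
    proof clarify
      fix s y assume s: "s \<in> S" and y: "y \<in> carrier G" "inv s \<otimes> y \<in> V"
      then have "s \<otimes> (inv s \<otimes> y) \<in> S"
        using subgroup.m_closed[OF S s] V(3) by blast
      then show "y \<in> S"
        using subgroup.mem_carrier[OF S s] y(1) by (simp add: m_inv_cancel_left)
    qed
  qed
  also have "openin T \<dots>"
    using V(1) subgroup.mem_carrier[OF S]
    by (intro openin_Union) (auto simp: openin_group_preimage continuous_map_l_mult)
  finally show ?thesis .
qed

lemma nbhd_mult_subset_compact_open:
  assumes U: "compactin T U" "openin T U"
  obtains V where "openin T V" "\<one> \<in> V" "\<And>u v. u \<in> U \<Longrightarrow> v \<in> V \<Longrightarrow> u \<otimes> v \<in> U"
proof -
  define W where "W = {z \<in> topspace (prod_topology T T). (\<lambda>(x, y). x \<otimes> y) z \<in> U}"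
  have W_open: "openin (prod_topology T T) W"
    unfolding W_def by (rule openin_continuous_map_preimage[OF continuous_mult U(2)])
  have U_W: "U \<times> {\<one>} \<subseteq> W"
    unfolding W_def using openin_subset[OF U(2)] topspace_eq by auto
  have "\<exists>U' V. openin T U' \<and> openin T V \<and> U \<subseteq> U' \<and> \<one> \<in> V \<and> U' \<times> V \<subseteq> W"
    using tube_lemma_left[OF W_open U(1) _ U_W] by (simp add: topspace_eq)
  then obtain V where V: "openin T V" "\<one> \<in> V" and UV: "U \<times> V \<subseteq> W"
    by blast
  have "u \<otimes> v \<in> U" if "u \<in> U" "v \<in> V" for u v
    using subsetD[OF UV, of "(u, v)"] that by (simp add: W_def)
  then show thesis
    using that V by blast
qed

lemma open_subgroup_subset_compact_open:
  assumes U: "compactin T U" "openin T U" "\<one> \<in> U"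
  obtains S where "subgroup S G" "openin T S" "S \<subseteq> U"
proof -
  have U_carrier: "U \<subseteq> carrier G"
    using openin_subset[OF U(2)] topspace_eq by simp
  obtain V where V: "openin T V" "\<one> \<in> V" and U_mult_V: "\<And>u v. u \<in> U \<Longrightarrow> v \<in> V \<Longrightarrow> u \<otimes> v \<in> U"
    using nbhd_mult_subset_compact_open[OF U(1,2)] by blast
  define V' where "V' = V \<inter> {x \<in> carrier G. inv x \<in> V}"
  have "openin T V'"
    unfolding V'_def using V(1)
    by (intro openin_Int openin_group_preimage continuous_map_group_inv) (simp_all add: continuous_map_id[unfolded id_def])
  have V'_carrier: "V' \<subseteq> carrier G"
    unfolding V'_def by blast
  define S where "S = generate G V'"
  have S: "subgroup S G"
    unfolding S_def using V'_carrier by (rule generate_is_subgroup)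
  have V'_inv: "inv v \<in> V'" if "v \<in> V'" for v
    using that unfolding V'_def by auto
  have U_mult_V': "u \<otimes> v \<in> U" if "u \<in> U" "v \<in> V'" for u v
    using U_mult_V that unfolding V'_def by blast
  have U_mult_S: "u \<otimes> g \<in> U" if "u \<in> U" "g \<in> S" for u g
    using mult_generate_closed[OF U_carrier V'_carrier V'_inv U_mult_V'] that unfolding S_def by blast
  have "S \<subseteq> U"
  proof
    fix g assume "g \<in> S"
    then have "\<one> \<otimes> g \<in> U"
      using U_mult_S U(3) by blast
    then show "g \<in> U"
      using subgroup.mem_carrier[OF S \<open>g \<in> S\<close>] by simp
  qed
  moreover have "openin T S"
  proof (rule openin_subgroup_if_nbhd_subset[OF S \<open>openin T V'\<close>])
    show "\<one> \<in> V'"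
      unfolding V'_def using V(2) by simp
    show "V' \<subseteq> S"
      unfolding S_def by (rule subsetI) (rule generate.incl)
  qed
  ultimately show thesis
    using that S by blast
qed

lemma finite_rcosets_open_subgroup:
  assumes "compact_space T" and V: "subgroup V G" "openin T V"
  shows "finite (rcosets V)"
proof -
  have "topspace T \<subseteq> \<Union> (rcosets V)"
  proof
    fix x assume "x \<in> topspace T"
    then have x: "x \<in> carrier G"
      using topspace_eq by simp
    show "x \<in> \<Union> (rcosets V)"
      using rcos_self[OF x V(1)] rcosetsI[OF subgroup.subset[OF V(1)] x] by blast
  qed
  moreover have "\<forall>R \<in> rcosets V. openin T R"
  proof
    fix R assume "R \<in> rcosets V"
    then obtain g where "g \<in> carrier G" "R = V #> g"
      unfolding RCOSETS_def by blast
    then show "openin T R"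
      using openin_r_coset[OF V] by simp
  qed
  ultimately obtain F where F: "finite F" "F \<subseteq> rcosets V" "topspace T \<subseteq> \<Union> F"
    using \<open>compact_space T\<close>[unfolded compact_space_alt, rule_format, of "rcosets V"] by auto
  have "rcosets V \<subseteq> F"
  proof
    fix R assume "R \<in> rcosets V"
    obtain g where g: "g \<in> carrier G" "R = V #> g"
      using \<open>R \<in> rcosets V\<close> unfolding RCOSETS_def by blast
    have "g \<in> \<Union> F"
      using F(3) g(1) topspace_eq by blast
    then obtain R' where "R' \<in> F" "g \<in> R'"
      by blast
    moreover obtain g' where g': "g' \<in> carrier G" "R' = V #> g'"
      using \<open>R' \<in> F\<close> F(2) unfolding RCOSETS_def by blast
    ultimately have "R' = R"
      using repr_independence[OF _ g'(1) V(1)] g by simp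
    then show "R \<in> F"
      using \<open>R' \<in> F\<close> by simp
  qed
  then show ?thesis
    using F(1) by (rule finite_subset)
qed

lemma open_normal_subgroup_subset_open_subgroup:
  assumes "compact_space T" and V: "subgroup V G" "openin T V"
  obtains N where "N \<lhd> G" "openin T N" "N \<subseteq> V"
proof -
  define N where "N = (\<Inter>R \<in> rcosets V. {g \<in> carrier G. R #> inv g = R})"
  have V_coset: "V \<in> rcosets V"
    by (rule subgroup.subgroup_in_rcosets[OF V(1) is_group])
  have "openin T {g \<in> carrier G. R #> inv g = R}" if R: "R \<in> rcosets V" for R
  proof -
    obtain c where c: "c \<in> carrier G" "R = V #> c"
      using R unfolding RCOSETS_def by blast
    have "R #> inv g = R \<longleftrightarrow> c \<otimes> inv g \<otimes> inv c \<in> V" if "g \<in> carrier G" for g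
      using c that r_coset_eq_iff[OF V(1), of "c \<otimes> inv g" c]
      by (simp add: coset_mult_assoc subgroup.subset[OF V(1)])
    then have "{g \<in> carrier G. R #> inv g = R} = {g \<in> carrier G. c \<otimes> inv g \<otimes> inv c \<in> V}"
      by auto
    moreover have "continuous_map T T (\<lambda>g. c \<otimes> inv g \<otimes> inv c)"
      using c(1) by (intro continuous_map_group_mult continuous_map_group_inv continuous_map_group_const)
        (simp_all add: continuous_map_id[unfolded id_def])
    ultimately show ?thesis
      using openin_group_preimage V(2) by simp
  qed
  then have "openin T N"
    unfolding N_def using finite_rcosets_open_subgroup[OF assms] V_coset
    by (intro openin_INT2) auto
  moreover have "N \<subseteq> V"
  proof
    fix g assume "g \<in> N"
    then have g: "g \<in> carrier G" "V #> inv g = V"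
      using V_coset unfolding N_def by auto
    then have "inv g \<in> V"
      using rcos_self[of "inv g" V] V(1) by simp
    then show "g \<in> V"
      using g(1) subgroup.m_inv_closed[OF V(1)] by fastforce
  qed
  ultimately show thesis
    using that normal_Inter_rcoset_stabilizers[OF V(1)] unfolding N_def by blast
qed

lemma maximal_open_subgroup_intermediate:
  assumes M: "maximal_open_subgroup G T H M" and H: "subgroup H G"
    and L: "subgroup L G" "M \<subseteq> L" "L \<subseteq> H"
  shows "L = M \<or> L = H"
proof -
  have M_sub: "subgroup M G" "openin (subtopology T H) M"
    and max: "\<And>L. subgroup L G \<Longrightarrow> M \<subseteq> L \<Longrightarrow> L \<subset> H \<Longrightarrow> openin (subtopology T H) L \<Longrightarrow> L = M"
    using M unfolding maximal_open_subgroup_def by blast+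
  have "openin (subtopology T H) L"
    using openin_subtopology_subgroup_superset[OF H M_sub(1,2) L] .
  then show ?thesis
    using max[OF L(1,2)] L(3) by blast
qed

lemma maximal_subgroup_quotient_image:
  assumes N: "N \<lhd> G" and H: "subgroup H G" and M: "maximal_open_subgroup G T H M"
    and H_N: "H \<inter> N \<subseteq> M"
  shows "maximal_subgroup ((G Mod N)\<lparr>carrier := (\<lambda>x. N #> x) ` H\<rparr>) ((\<lambda>x. N #> x) ` M)"
proof -
  interpret N: normal N G by (rule N)
  define Q where "Q = G Mod N"
  define \<phi> where "\<phi> = (\<lambda>x. N #> x)"
  have M_sub: "subgroup M G" "M \<subset> H"
    using M unfolding maximal_open_subgroup_def by blast+
  have Q: "group Q"
    unfolding Q_def by (rule N.factorgroup_is_group)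
  have hom: "group_hom G Q \<phi>"
    unfolding group_hom_def group_hom_axioms_def Q_def \<phi>_def
    using is_group N.factorgroup_is_group N.r_coset_hom_Mod by blast
  have A: "subgroup (\<phi> ` H) Q" and B: "subgroup (\<phi> ` M) Q"
    using group_hom.subgroup_img_is_subgroup[OF hom] H M_sub(1) by blast+
  have M_of_image: "x \<in> M" if x: "x \<in> H" "\<phi> x \<in> \<phi> ` M" for x
  proof -
    obtain m where "m \<in> M" "N #> x = N #> m"
      using x(2) unfolding \<phi>_def by blast
    then show ?thesis
      using N.mem_of_r_coset_eq[OF H M_sub(1) _ H_N x(1)] M_sub(2) by blast
  qed
  show ?thesis
    unfolding maximal_subgroup_def Q_def[symmetric] \<phi>_def[symmetric]
  proof (intro conjI allI impI)
    show "subgroup (\<phi> ` M) (Q\<lparr>carrier := \<phi> ` H\<rparr>)"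
      using group.subgroup_incl[OF Q B A] M_sub(2) by blast
    show "\<phi> ` M \<noteq> carrier (Q\<lparr>carrier := \<phi> ` H\<rparr>)"
      using M_of_image M_sub(2) by auto
    fix L assume L: "subgroup L (Q\<lparr>carrier := \<phi> ` H\<rparr>) \<and> \<phi> ` M \<subseteq> L"
    have "subgroup L Q"
      using group.incl_subgroup[OF Q A] L by blast
    moreover have "L \<subseteq> \<phi> ` H"
      using L subgroup.subset by fastforce
    moreover have "M \<subseteq> H"
      using M_sub(2) by blast
    ultimately have "L = \<phi> ` M \<or> L = \<phi> ` H"
      using L group_hom.image_subgroup_intermediate[OF hom H M_sub(1) _ maximal_open_subgroup_intermediate[OF M H]]
      by simp
    then show "L = \<phi> ` M \<or> L = carrier (Q\<lparr>carrier := \<phi> ` H\<rparr>)"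
      by simp
  qed
qed

lemma pow_mem_maximal_open_subgroup_of_p_group_quotient:
  assumes N: "N \<lhd> G" "finite (carrier (G Mod N))" "order (G Mod N) = p ^ k" and p: "prime p"
    and H: "subgroup H G" and M: "maximal_open_subgroup G T H M" and H_N: "H \<inter> N \<subseteq> M"
    and h: "h \<in> H"
  shows "h [^] p \<in> M"
proof -
  interpret N: normal N G by (rule N(1))
  define Q where "Q = G Mod N"
  define \<phi> where "\<phi> = (\<lambda>x. N #> x)"
  define Qa where "Qa = Q\<lparr>carrier := \<phi> ` H\<rparr>"
  have Q: "group Q"
    unfolding Q_def by (rule N.factorgroup_is_group)
  have "group_hom G Q \<phi>"
    unfolding group_hom_def group_hom_axioms_def Q_def \<phi>_def
    using is_group N.factorgroup_is_group N.r_coset_hom_Mod by blast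
  then have A: "subgroup (\<phi> ` H) Q"
    using group_hom.subgroup_img_is_subgroup H by blast
  obtain j where "card (\<phi> ` H) = p ^ j"
    using group.card_subgroup_of_p_group[OF Q N(3)[folded Q_def] p A] .
  then have "order Qa = p ^ j"
    by (simp add: Qa_def order_def)
  moreover have "finite (carrier Qa)"
    using N(2) subgroup.subset[OF A] by (auto simp: Qa_def Q_def intro: finite_subset)
  moreover have "maximal_subgroup Qa (\<phi> ` M)"
    unfolding Qa_def Q_def \<phi>_def by (rule maximal_subgroup_quotient_image[OF N(1) H M H_N])
  moreover have "\<phi> h \<in> carrier Qa"
    using h by (simp add: Qa_def)
  ultimately have "\<phi> h [^]\<^bsub>Qa\<^esub> p \<in> \<phi> ` M"
    using group.maximal_subgroup_of_p_group_pow_mem[OF subgroup.subgroup_is_group[OF A Q] _ _ p]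
    unfolding Qa_def by blast
  moreover have "\<phi> h [^]\<^bsub>Qa\<^esub> p = \<phi> (h [^] p)"
    unfolding Qa_def Q_def \<phi>_def by (rule N.FactGroup_subgroup_pow) (rule subgroup.mem_carrier[OF H h])
  ultimately obtain m where "m \<in> M" "N #> h [^] p = N #> m"
    unfolding \<phi>_def by auto
  moreover have "M \<subseteq> H" "subgroup M G"
    using M unfolding maximal_open_subgroup_def by blast+
  ultimately show ?thesis
    using N.mem_of_r_coset_eq[OF H _ _ H_N subgroup_nat_pow_closed[OF H h]] by blast
qed

end

section \<open>Pro-\<open>p\<close> groups\<close>

locale pro_p = topological_group G T for G :: "('a, 'b) monoid_scheme" (structure) and T +
  fixes p :: nat
  assumes prime_p: "prime p"
    and compact: "compact_space T"
    and Hausdorff: "Hausdorff_space T"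
    and singleton_components: "x \<in> topspace T \<Longrightarrow> connected_component_of_set T x = {x}"
    and card_rcosets_open_normal: "N \<lhd> G \<Longrightarrow> openin T N \<Longrightarrow> \<exists>k. card (rcosets N) = p ^ k"

lemma pro_p_group_imp_pro_p: "pro_p_group p G T \<Longrightarrow> pro_p G T p"
  unfolding pro_p_group_def pro_p_def pro_p_axioms_def
  using topgroup_imp_topological_group by blast

context pro_p
begin

lemma open_normal_subgroup_subset_nbhd:
  assumes "openin T W" "\<one> \<in> W"
  obtains N where "N \<lhd> G" "openin T N" "N \<subseteq> W"
proof -
  obtain U where U: "openin T U" "closedin T U" "\<one> \<in> U" "U \<subseteq> W"
    using clopen_nbhd_of_singleton_component[OF compact Hausdorff singleton_components assms]
      topspace_eq by blast
  moreover have "compactin T U"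
    using closedin_compact_space[OF compact U(2)] .
  ultimately obtain S where "subgroup S G" "openin T S" "S \<subseteq> U"
    using open_subgroup_subset_compact_open by blast
  then obtain N where "N \<lhd> G" "openin T N" "N \<subseteq> S"
    using open_normal_subgroup_subset_open_subgroup[OF compact] by blast
  then show thesis
    using that \<open>S \<subseteq> U\<close> \<open>U \<subseteq> W\<close> by blast
qed

lemma finite_p_group_Mod_open_normal:
  assumes "N \<lhd> G" "openin T N"
  obtains k where "finite (carrier (G Mod N))" "order (G Mod N) = p ^ k"
proof -
  obtain k where k: "order (G Mod N) = p ^ k"
    using card_rcosets_open_normal[OF assms] unfolding order_def FactGroup_def by auto
  moreover have "finite (carrier (G Mod N))"
    using k prime_gt_0_nat[OF prime_p] by (auto simp: order_def intro: card_ge_0_finite)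
  ultimately show thesis
    using that by blast
qed

lemma open_normal_subgroup_Int_subset:
  assumes "subgroup M G" "openin (subtopology T H) M"
  obtains N where "N \<lhd> G" "openin T N" "H \<inter> N \<subseteq> M"
proof -
  obtain W where W: "openin T W" "M = W \<inter> H"
    using assms(2) unfolding openin_subtopology by blast
  then obtain N where "N \<lhd> G" "openin T N" "N \<subseteq> W"
    using open_normal_subgroup_subset_nbhd subgroup.one_closed[OF assms(1)] by blast
  then show thesis
    using that W(2) by blast
qed

lemma pow_mem_maximal_open_subgroup:
  assumes H: "subgroup H G" and M: "maximal_open_subgroup G T H M" and h: "h \<in> H"
  shows "h [^] p \<in> M"
proof -
  have "subgroup M G" "openin (subtopology T H) M"
    using M unfolding maximal_open_subgroup_def by blast+
  then obtain N where N: "N \<lhd> G" "openin T N" and H_N: "H \<inter> N \<subseteq> M"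
    by (rule open_normal_subgroup_Int_subset)
  obtain k where "finite (carrier (G Mod N))" "order (G Mod N) = p ^ k"
    using finite_p_group_Mod_open_normal[OF N] .
  then show ?thesis
    using pow_mem_maximal_open_subgroup_of_p_group_quotient[OF N(1) _ _ prime_p H M H_N h] by blast
qed

lemma pow_mem_frattini: "subgroup H G \<Longrightarrow> h \<in> H \<Longrightarrow> h [^] p \<in> frattini G T H"
  unfolding frattini_def using subgroup_nat_pow_closed pow_mem_maximal_open_subgroup by blast

theorem frattini_resistant_iff_frattini_reflects_subset:
  "frattini_resistant p G T \<longleftrightarrow>
    (\<forall>H K. fg_subgroup G T H \<and> fg_subgroup G T K \<and> frattini G T H \<subseteq> frattini G T K
       \<longrightarrow> H \<subseteq> K)"
proof
  assume resistant: "frattini_resistant p G T"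
  show "\<forall>H K. fg_subgroup G T H \<and> fg_subgroup G T K \<and> frattini G T H \<subseteq> frattini G T K
     \<longrightarrow> H \<subseteq> K"
  proof (intro allI impI subsetI, elim conjE)
    fix H K h
    assume H: "fg_subgroup G T H" and K: "fg_subgroup G T K"
      and frattini_subset: "frattini G T H \<subseteq> frattini G T K" and h: "h \<in> H"
    have "subgroup H G"
      using H unfolding fg_subgroup_def closed_subgroup_def by blast
    then have "h [^] p \<in> frattini G T K" "h \<in> carrier G"
      using pow_mem_frattini[of H h] h frattini_subset subgroup.mem_carrier[of H G h] by blast+
    moreover have "hierarchical p G K (frattini G T K)"
      using resistant K unfolding frattini_resistant_def by blast
    ultimately show "h \<in> K"
      unfolding hierarchical_def by blast
  qed
next
  assume reflects: "\<forall>H K. fg_subgroup G T H \<and> fg_subgroup G T K \<and> frattini G T H \<subseteq> frattini G T K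
     \<longrightarrow> H \<subseteq> K"
  show "frattini_resistant p G T"
    unfolding frattini_resistant_def hierarchical_def
  proof (intro allI impI ballI)
    fix H x
    assume H: "fg_subgroup G T H" and x: "x \<in> carrier G" "x [^] p \<in> frattini G T H"
    have "subgroup H G" "closedin T H"
      using H unfolding fg_subgroup_def closed_subgroup_def by blast+
    then have "frattini G T (T closure_of generate G {x}) \<subseteq> frattini G T H"
      by (rule frattini_closure_cyclic_subset[OF prime_p _ _ x])
    then have "T closure_of generate G {x} \<subseteq> H"
      by (rule reflects[rule_format, OF conjI[OF fg_subgroup_closure_cyclic(1)[OF x(1)] conjI[OF H]]])
    then show "x \<in> H"
      using fg_subgroup_closure_cyclic(2)[OF x(1)] by blast
  qed
qed

end

theorem mainTheorem18:
  fixes p :: nat and G :: "('a, 'b) monoid_scheme" and T :: "'a topology"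
  assumes "pro_p_group p G T"
  shows "frattini_resistant p G T \<longleftrightarrow>
    (\<forall>H K. fg_subgroup G T H \<and> fg_subgroup G T K \<and> frattini G T H \<subseteq> frattini G T K
       \<longrightarrow> H \<subseteq> K)"
  using pro_p.frattini_resistant_iff_frattini_reflects_subset[OF pro_p_group_imp_pro_p[OF assms]] .

end
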